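(* For the Steiner tree problem with revenues, budgets and hop constraints (STPRBH), the partial-ordering model (P-STPRBH) is strictly stronger than the assignment model (A-STPRBH): for every STPRBH instance the LP relaxation values satisfy $\nu_{\text{P-STPRBH}}\le\nu_{\text{A-STPRBH}}$, and there exist STPRBH instances for which this inequality is strict.
   Context: STPRBH instance: a complete undirected graph $G=(V,E)$ with edge costs $c:E\to\mathbb{R}_{>0}$, node revenues $\rho:V\to\mathbb{R}_{\ge0}$, a root $r\in V$, a hop limit $H\ge1$ and a budget $B\ge0$. For every ordered pair $(u,v)$ of distinct nodes there is a variable $x_{u,v}$. Common $x$-constraints: (X1) $\sum_{u\neq v}x_{u,v}\le1$ for all $v\in V$; (X2) $\sum_{u\in V\setminus\{v,w\}}x_{u,v}\ge x_{v,w}$ for all $v\in V\setminus\{r\}$, $w\neq v$; (X3) $0\le x_{u,v}\le1$; (X5) $\sum_{uv\in E}c_{uv}(x_{u,v}+x_{v,u})\le B$. $\mathcal{P}^{STPRBH}$: all $(x,l,g)$ (with $l_{v,i},g_{i,v}$ for $v\in V$, $i=0,\dots,H$) satisfying (X1)–(X3),(X5) and $l_{r,0}=g_{0,r}=0$; $l_{v,1}=g_{H,v}=0$ for $v\neq r$; $l_{v,i}\le l_{v,i+1}$ and $g_{i,v}+l_{v,i+1}=1$ for $v\in V$, $i=0,\dots,H-1$; $l_{u,i}+g_{i,v}\ge x_{u,v}$ for $u\neq v$, $i=0,\dots,H$; $0\le l,g\le1$. $\mathcal{A}^{STPRBH}$: all $(x,y)$ (with $y_{v,i}$ for $v\in V$,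 $i=0,\dots,H$) satisfying (X1)–(X3),(X5) and $y_{r,0}=1$; $y_{r,i}=0$ for $i\ge1$; $y_{v,0}=0$ and $\sum_{i=1}^Hy_{v,i}=1$ for $v\neq r$; $y_{u,i}-y_{v,i+1}+x_{u,v}\le1$ for $u\neq v$, $i=0,\dots,H-1$; $y_{u,H}+x_{u,v}\le1$ for $u\neq v$; $0\le y\le1$. (A-STPRBH) and (P-STPRBH) maximize $\rho_r+\sum_{uv\in E}(x_{u,v}\rho_v+x_{v,u}\rho_u)$ over the integral points of $\mathcal{A}^{STPRBH}$ and $\mathcal{P}^{STPRBH}$ respectively. $\nu_M$ is the optimal value of the LP relaxation of ILP $M$. For a maximization problem, model $A$ is stronger than $B$ if $\nu_A\le\nu_B$ on all instances, and strictly stronger if moreover strict inequality holds for some instance. *)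

theory Defs
  imports Main "HOL-Library.Multiset" Complex_Main
begin

text \<open>An STPRBH instance on the complete graph with node set V. Edge costs of the
undirected edge uv are given by a symmetric function c (c u v = c v u), positive on
distinct nodes.\<close>

definition stprbh_instance ::
  "'a set \<Rightarrow> ('a \<Rightarrow> 'a \<Rightarrow> real) \<Rightarrow> ('a \<Rightarrow> real) \<Rightarrow> 'a \<Rightarrow> nat \<Rightarrow> real \<Rightarrow> bool" where
  "stprbh_instance V c \<rho> r H B \<longleftrightarrow>
     finite V \<and> r \<in> V \<and> H \<ge> 1 \<and> B \<ge> 0 \<and>
     (\<forall>u\<in>V. \<forall>v\<in>V. u \<noteq> v \<longrightarrow> c u v = c v u \<and> c u v > 0) \<and>
     (\<forall>v\<in>V. \<rho> v \<ge> 0)"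

definition arcs :: "'a set \<Rightarrow> ('a \<times> 'a) set" where
  "arcs V = {(u, v). u \<in> V \<and> v \<in> V \<and> u \<noteq> v}"

text \<open>Common constraints (X1), (X2), (X3), (X5).
 Sum over undirected edges uv of c_uv (x_uv + x_vu) equals the sum over arcs (u,v)
 of c_uv x_uv.\<close>
definition x_constraints ::
  "'a set \<Rightarrow> ('a \<Rightarrow> 'a \<Rightarrow> real) \<Rightarrow> 'a \<Rightarrow> real \<Rightarrow> ('a \<Rightarrow> 'a \<Rightarrow> real) \<Rightarrow> bool" where
  "x_constraints V c r B x \<longleftrightarrow>
     (\<forall>v\<in>V. (\<Sum>u\<in>V - {v}. x u v) \<le> 1) \<and>
     (\<forall>v\<in>V - {r}. \<forall>w\<in>V - {v}. (\<Sum>u\<in>V - {v, w}. x u v) \<ge> x v w) \<and>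
     (\<forall>(u, v)\<in>arcs V. 0 \<le> x u v \<and> x u v \<le> 1) \<and>
     (\<Sum>(u, v)\<in>arcs V. c u v * x u v) \<le> B"

text \<open>Objective: rho_r + sum over edges uv of (x_uv rho_v + x_vu rho_u)
  = rho_r + sum over arcs (u,v) of x_uv rho_v.\<close>
definition stprbh_obj :: "'a set \<Rightarrow> ('a \<Rightarrow> real) \<Rightarrow> 'a \<Rightarrow> ('a \<Rightarrow> 'a \<Rightarrow> real) \<Rightarrow> real" where
  "stprbh_obj V \<rho> r x = \<rho> r + (\<Sum>(u, v)\<in>arcs V. x u v * \<rho> v)"

definition P_poly ::
  "'a set \<Rightarrow> ('a \<Rightarrow> 'a \<Rightarrow> real) \<Rightarrow> 'a \<Rightarrow> nat \<Rightarrow> real \<Rightarrow>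
   (('a \<Rightarrow> 'a \<Rightarrow> real) \<times> ('a \<Rightarrow> nat \<Rightarrow> real) \<times> (nat \<Rightarrow> 'a \<Rightarrow> real)) set" where
  "P_poly V c r H B = {(x, l, g).
     x_constraints V c r B x \<and>
     l r 0 = 0 \<and> g 0 r = 0 \<and>
     (\<forall>v\<in>V - {r}. l v 1 = 0 \<and> g H v = 0) \<and>
     (\<forall>v\<in>V. \<forall>i<H. l v i \<le> l v (i + 1) \<and> g i v + l v (i + 1) = 1) \<and>
     (\<forall>(u, v)\<in>arcs V. \<forall>i\<le>H. l u i + g i v \<ge> x u v) \<and>
     (\<forall>v\<in>V. \<forall>i\<le>H. 0 \<le> l v i \<and> l v i \<le> 1 \<and> 0 \<le> g i v \<and> g i v \<le> 1)}"

definition A_poly ::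
  "'a set \<Rightarrow> ('a \<Rightarrow> 'a \<Rightarrow> real) \<Rightarrow> 'a \<Rightarrow> nat \<Rightarrow> real \<Rightarrow>
   (('a \<Rightarrow> 'a \<Rightarrow> real) \<times> ('a \<Rightarrow> nat \<Rightarrow> real)) set" where
  "A_poly V c r H B = {(x, y).
     x_constraints V c r B x \<and>
     y r 0 = 1 \<and> (\<forall>i\<in>{1..H}. y r i = 0) \<and>
     (\<forall>v\<in>V - {r}. y v 0 = 0 \<and> (\<Sum>i=1..H. y v i) = 1) \<and>
     (\<forall>(u, v)\<in>arcs V. \<forall>i<H. y u i - y v (i + 1) + x u v \<le> 1) \<and>
     (\<forall>(u, v)\<in>arcs V. y u H + x u v \<le> 1) \<and>
     (\<forall>v\<in>V. \<forall>i\<le>H. 0 \<le> y v i \<and> y v i \<le> 1)}"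

definition nu_P :: "'a set \<Rightarrow> ('a \<Rightarrow> 'a \<Rightarrow> real) \<Rightarrow> ('a \<Rightarrow> real) \<Rightarrow> 'a \<Rightarrow> nat \<Rightarrow> real \<Rightarrow> real" where
  "nu_P V c \<rho> r H B = Sup ((\<lambda>(x, l, g). stprbh_obj V \<rho> r x) ` P_poly V c r H B)"

definition nu_A :: "'a set \<Rightarrow> ('a \<Rightarrow> 'a \<Rightarrow> real) \<Rightarrow> ('a \<Rightarrow> real) \<Rightarrow> 'a \<Rightarrow> nat \<Rightarrow> real \<Rightarrow> real" where
  "nu_A V c \<rho> r H B = Sup ((\<lambda>(x, y). stprbh_obj V \<rho> r x) ` A_poly V c r H B)"

end

theory Submission
  imports Defs
begin

text \<open>Read \<open>l v i\<close> as the part of \<open>v\<close> whose depth is below \<open>i\<close>, so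
  \<open>depth_ge v i = 1 - l v i\<close> is the part at depth at least \<open>i\<close>. From \<open>(x, l, g)\<close> in the
  partial-ordering polytope an assignment for the same \<open>x\<close> is built level by level: at level
  \<open>k + 1\<close> a non-root node \<open>v\<close> receives the least amount \<open>demand (y k) v\<close> allowed by the
  assignment inequalities \<open>y (k + 1) v \<ge> y k u + x u v - 1\<close>, topped up so that its cumulative
  mass is at least \<open>cum_lower (k + 1) v\<close>, a bound that equals 1 at level \<open>H\<close>. The ordering
  inequalities \<open>x u v \<le> l u k + 1 - l v (k + 1)\<close> bound every increment by
  \<open>depth_ge v (k + 1)\<close>, so the cumulative mass either sits at its lower bound or is at most the
  accumulated demand; and the in-degree constraint (X1) bounds the total demand by 1. Hence the
  mass of every non-root node is exactly 1.

  For strictness: in the partial-ordering model no arc enters the root, while the assignment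
  model admits the fractional cycle \<open>0 \<rightarrow> 2 \<rightarrow> 1 \<rightarrow> 0\<close> through the root, which collects
  the root revenue a second time.\<close>

lemma sum_max_0_diff_le:
  fixes a :: "'b \<Rightarrow> 'c::linordered_ab_group_add"
  assumes "finite I" and "\<And>i. i \<in> I \<Longrightarrow> 0 \<le> a i" and "0 \<le> s"
  shows "(\<Sum>i\<in>I. max 0 (a i - s)) \<le> max 0 (sum a I - s)"
  using assms
proof (induction I rule: finite_induct)
  case empty
  then show ?case by simp
next
  case (insert j F)
  have "0 \<le> a j" and "0 \<le> sum a F"
    using insert.prems by (auto intro: sum_nonneg)
  have "(\<Sum>i\<in>insert j F. max 0 (a i - s)) \<le> max 0 (a j - s) + max 0 (sum a F - s)"
    using insert by simp
  also have "\<dots> \<le> max 0 (a j + sum a F - s)"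
    using \<open>0 \<le> a j\<close> \<open>0 \<le> sum a F\<close> \<open>0 \<le> s\<close> by (auto simp: max_def algebra_simps add_increasing add_increasing2)
  finally show ?case
    using insert by (simp add: add.assoc)
qed

locale P_point =
  fixes V :: "'a set" and c :: "'a \<Rightarrow> 'a \<Rightarrow> real" and r :: 'a and H :: nat and B :: real
    and x :: "'a \<Rightarrow> 'a \<Rightarrow> real" and l :: "'a \<Rightarrow> nat \<Rightarrow> real" and g :: "nat \<Rightarrow> 'a \<Rightarrow> real"
  assumes finite_V: "finite V" and root_in_V: "r \<in> V" and hop_limit_pos: "1 \<le> H"
    and in_P_poly: "(x, l, g) \<in> P_poly V c r H B"
begin

lemma x_constraints: "x_constraints V c r B x"
  using in_P_poly by (simp add: P_poly_def)

lemma in_degree_le_one: "v \<in> V \<Longrightarrow> (\<Sum>u\<in>V - {v}. x u v) \<le> 1"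
  using x_constraints by (simp add: x_constraints_def)

lemma x_nonneg: "u \<in> V \<Longrightarrow> v \<in> V \<Longrightarrow> u \<noteq> v \<Longrightarrow> 0 \<le> x u v"
  and x_le_one: "u \<in> V \<Longrightarrow> v \<in> V \<Longrightarrow> u \<noteq> v \<Longrightarrow> x u v \<le> 1"
  using x_constraints by (auto simp: x_constraints_def arcs_def)

lemma l_nonneg: "v \<in> V \<Longrightarrow> i \<le> H \<Longrightarrow> 0 \<le> l v i"
  and l_le_one: "v \<in> V \<Longrightarrow> i \<le> H \<Longrightarrow> l v i \<le> 1"
  using in_P_poly by (auto simp: P_poly_def)

lemma l_1_eq_0: "v \<in> V \<Longrightarrow> v \<noteq> r \<Longrightarrow> l v 1 = 0"
  using in_P_poly by (simp add: P_poly_def)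

lemma x_le_l_plus_g: "u \<in> V \<Longrightarrow> v \<in> V \<Longrightarrow> u \<noteq> v \<Longrightarrow> i \<le> H \<Longrightarrow> x u v \<le> l u i + g i v"
  using in_P_poly by (auto simp: P_poly_def arcs_def)

lemma g_plus_l_Suc: "v \<in> V \<Longrightarrow> i < H \<Longrightarrow> g i v + l v (Suc i) = 1"
  using in_P_poly by (simp add: P_poly_def)

lemma l_le_l_Suc: "v \<in> V \<Longrightarrow> i < H \<Longrightarrow> l v i \<le> l v (Suc i)"
  using in_P_poly by (simp add: P_poly_def)

lemma x_le_order_step:
  assumes "u \<in> V" "v \<in> V" "u \<noteq> v" "k < H"
  shows "x u v \<le> l u k + 1 - l v (Suc k)"
  using x_le_l_plus_g[of u v k] g_plus_l_Suc[of v k] assms by simp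

lemma x_le_order_last:
  assumes "u \<in> V" "v \<in> V" "u \<noteq> v" "v \<noteq> r"
  shows "x u v \<le> l u H"
proof -
  have "g H v = 0"
    using in_P_poly assms by (simp add: P_poly_def)
  then show ?thesis
    using x_le_l_plus_g[of u v H] assms by simp
qed

lemma no_arc_into_root:
  assumes "u \<in> V" "u \<noteq> r"
  shows "x u r = 0"
proof -
  have "g 0 r = 0"
    using in_P_poly by (simp add: P_poly_def)
  then have "x u r \<le> l u 1"
    using x_le_l_plus_g[of u r 0] l_le_l_Suc[of u 0] assms root_in_V hop_limit_pos by simp
  then have "x u r \<le> 0"
    using l_1_eq_0 assms by simp
  with x_nonneg assms root_in_V show ?thesis by force
qed

definition depth_ge :: "'a \<Rightarrow> nat \<Rightarrow> real" where
  "depth_ge v i = 1 - l v i"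

definition cum_lower :: "nat \<Rightarrow> 'a \<Rightarrow> real" where
  "cum_lower k v = 1 - (\<Sum>i = Suc k..H. depth_ge v i)"

definition demand :: "('a \<Rightarrow> real) \<Rightarrow> 'a \<Rightarrow> real" where
  "demand y v = Max (insert 0 ((\<lambda>u. y u + x u v - 1) ` (V - {v})))"

primrec levels :: "nat \<Rightarrow> ('a \<Rightarrow> real) \<times> ('a \<Rightarrow> real)" where
  "levels 0 = (\<lambda>v. if v = r then 1 else 0, \<lambda>v. 0)"
| "levels (Suc k) =
     (let (y, Q) = levels k;
          Q' = (\<lambda>v. max (Q v + demand y v) (cum_lower (Suc k) v))
      in (\<lambda>v. if v = r then 0 else Q' v - Q v, Q'))"

definition assign :: "nat \<Rightarrow> 'a \<Rightarrow> real" where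
  "assign k = fst (levels k)"

definition cum :: "nat \<Rightarrow> 'a \<Rightarrow> real" where
  "cum k = snd (levels k)"

lemma assign_0: "assign 0 v = (if v = r then 1 else 0)"
  by (simp add: assign_def)

lemma cum_0: "cum 0 v = 0"
  by (simp add: cum_def)

lemma cum_Suc: "cum (Suc k) v = max (cum k v + demand (assign k) v) (cum_lower (Suc k) v)"
  by (simp add: cum_def assign_def split_beta)

lemma assign_Suc: "assign (Suc k) v = (if v = r then 0 else cum (Suc k) v - cum k v)"
  by (simp add: cum_def assign_def split_beta)

lemma demand_nonneg: "0 \<le> demand y v"
  unfolding demand_def using finite_V by (intro Max_ge) auto

lemma demand_ge: "u \<in> V \<Longrightarrow> u \<noteq> v \<Longrightarrow> y u + x u v - 1 \<le> demand y v"
  unfolding demand_def using finite_V by (intro Max_ge) auto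

lemma demand_le:
  "(\<And>u. u \<in> V \<Longrightarrow> u \<noteq> v \<Longrightarrow> y u + x u v - 1 \<le> b) \<Longrightarrow> 0 \<le> b \<Longrightarrow> demand y v \<le> b"
  unfolding demand_def using finite_V by (intro Max.boundedI) auto

lemma assign_nonneg: "0 \<le> assign k v"
  by (cases k) (auto simp: assign_0 assign_Suc cum_Suc le_max_iff_disj demand_nonneg)

lemma assign_root: "0 < k \<Longrightarrow> assign k r = 0"
  by (cases k) (auto simp: assign_Suc)

lemma depth_ge_nonneg: "v \<in> V \<Longrightarrow> i \<le> H \<Longrightarrow> 0 \<le> depth_ge v i"
  and depth_ge_le_one: "v \<in> V \<Longrightarrow> i \<le> H \<Longrightarrow> depth_ge v i \<le> 1"
  using l_nonneg l_le_one by (auto simp: depth_ge_def)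

lemma cum_lower_Suc: "k < H \<Longrightarrow> cum_lower (Suc k) v = cum_lower k v + depth_ge v (Suc k)"
  by (simp add: cum_lower_def sum.atLeast_Suc_atMost)

lemma cum_lower_le_one: "v \<in> V \<Longrightarrow> cum_lower k v \<le> 1"
  unfolding cum_lower_def by (auto intro!: sum_nonneg depth_ge_nonneg)

lemma cum_lower_H: "cum_lower H v = 1"
  by (simp add: cum_lower_def)

lemma cum_lower_le_cum:
  assumes "v \<in> V" "v \<noteq> r"
  shows "cum_lower k v \<le> cum k v"
proof (cases k)
  case 0
  have "depth_ge v 1 \<le> (\<Sum>i = 1..H. depth_ge v i)"
    using hop_limit_pos assms by (intro member_le_sum) (auto intro: depth_ge_nonneg)
  moreover have "depth_ge v 1 = 1"
    using l_1_eq_0 assms by (simp add: depth_ge_def)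
  ultimately show ?thesis
    using 0 by (simp add: cum_lower_def cum_0)
next
  case (Suc j)
  then show ?thesis by (simp add: cum_Suc)
qed

lemma demand_le_depth_ge:
  assumes k: "k < H" and v: "v \<in> V" "v \<noteq> r"
    and assign_k: "\<And>u. u \<in> V \<Longrightarrow> u \<noteq> r \<Longrightarrow> 0 < k \<Longrightarrow> assign k u \<le> depth_ge u k"
  shows "demand (assign k) v \<le> depth_ge v (Suc k)"
proof (rule demand_le)
  show "0 \<le> depth_ge v (Suc k)"
    using depth_ge_nonneg v k by simp
next
  fix u assume u: "u \<in> V" "u \<noteq> v"
  have x_uv: "x u v \<le> 1"
    using x_le_one u v by simp
  consider "k = 0" "u = r" | "0 < k" "u \<noteq> r" | "k = 0 \<and> u \<noteq> r \<or> 0 < k \<and> u = r"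
    by blast
  then show "assign k u + x u v - 1 \<le> depth_ge v (Suc k)"
  proof cases
    case 1
    then show ?thesis
      using x_uv l_1_eq_0 v by (simp add: assign_0 depth_ge_def)
  next
    case 2
    then show ?thesis
      using assign_k[of u] x_le_order_step[of u v k] u v k by (simp add: depth_ge_def)
  next
    case 3
    then have "assign k u = 0"
      by (auto simp: assign_0 assign_root)
    then show ?thesis
      using x_uv depth_ge_nonneg[of v "Suc k"] v k by simp
  qed
qed

lemma assign_le_depth_ge: "0 < k \<Longrightarrow> k \<le> H \<Longrightarrow> v \<in> V \<Longrightarrow> v \<noteq> r \<Longrightarrow> assign k v \<le> depth_ge v k"
proof (induction k arbitrary: v)
  case 0
  then show ?case by simp
next
  case (Suc k)
  have "demand (assign k) v \<le> depth_ge v (Suc k)"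
    using Suc by (intro demand_le_depth_ge) auto
  moreover have "cum_lower (Suc k) v - cum k v \<le> depth_ge v (Suc k)"
    using cum_lower_Suc[of k v] cum_lower_le_cum[of v k] Suc.prems by simp
  ultimately show ?case
    using Suc.prems by (simp add: assign_Suc cum_Suc)
qed

lemma demand_assign_le_depth_ge:
  "k < H \<Longrightarrow> v \<in> V \<Longrightarrow> v \<noteq> r \<Longrightarrow> demand (assign k) v \<le> depth_ge v (Suc k)"
  by (intro demand_le_depth_ge assign_le_depth_ge) auto

lemma sum_assign_eq_cum: "v \<noteq> r \<Longrightarrow> (\<Sum>i<Suc k. assign i v) = cum k v"
  by (induction k) (auto simp: assign_0 cum_0 assign_Suc)

lemma cum_eq_sum_assign: "v \<noteq> r \<Longrightarrow> cum k v = (\<Sum>i = 1..k. assign i v)"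
  by (induction k) (auto simp: cum_0 assign_Suc)

lemma sum_assign_root: "(\<Sum>i<Suc k. assign i r) = 1"
  by (induction k) (auto simp: assign_0 assign_Suc)

text \<open>An arc \<open>u \<rightarrow> v\<close> adds at most \<open>x u v\<close> to the total demand at \<open>v\<close>
  over all levels, because the mass of \<open>u\<close> sums to at most 1.\<close>
lemma sum_demand_le_one:
  assumes v: "v \<in> V" and mass_le_one: "\<And>u. u \<in> V \<Longrightarrow> (\<Sum>i<n. assign i u) \<le> 1"
  shows "(\<Sum>i<n. demand (assign i) v) \<le> 1"
proof -
  let ?excess = "\<lambda>i u. max 0 (assign i u - (1 - x u v))"
  have "(\<Sum>i<n. demand (assign i) v) \<le> (\<Sum>i<n. \<Sum>u\<in>V - {v}. ?excess i u)"
  proof (intro sum_mono demand_le)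
    fix i u assume u: "u \<in> V" "u \<noteq> v"
    have "assign i u + x u v - 1 \<le> ?excess i u"
      by simp
    also have "\<dots> \<le> (\<Sum>u\<in>V - {v}. ?excess i u)"
      using u finite_V by (intro member_le_sum) auto
    finally show "assign i u + x u v - 1 \<le> (\<Sum>u\<in>V - {v}. ?excess i u)" .
  qed (simp add: sum_nonneg)
  also have "\<dots> = (\<Sum>u\<in>V - {v}. \<Sum>i<n. ?excess i u)"
    by (rule sum.swap)
  also have "\<dots> \<le> (\<Sum>u\<in>V - {v}. x u v)"
  proof (rule sum_mono)
    fix u assume u: "u \<in> V - {v}"
    have "(\<Sum>i<n. ?excess i u) \<le> max 0 ((\<Sum>i<n. assign i u) - (1 - x u v))"
      using x_le_one[of u v] u v by (intro sum_max_0_diff_le) (auto simp: assign_nonneg)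
    also have "\<dots> \<le> x u v"
      using mass_le_one[of u] x_nonneg[of u v] u v by auto
    finally show "(\<Sum>i<n. ?excess i u) \<le> x u v" .
  qed
  also have "\<dots> \<le> 1"
    using in_degree_le_one v .
  finally show ?thesis .
qed

lemma cum_le_demand_or_cum_lower:
  "k \<le> H \<Longrightarrow> v \<in> V \<Longrightarrow> v \<noteq> r \<Longrightarrow>
    cum k v \<le> (\<Sum>i<k. demand (assign i) v) \<or> cum k v \<le> cum_lower k v"
proof (induction k)
  case 0
  then show ?case by (simp add: cum_0)
next
  case (Suc k)
  have "demand (assign k) v \<le> depth_ge v (Suc k)"
    using Suc.prems by (intro demand_assign_le_depth_ge) auto
  then show ?case
    using Suc cum_lower_Suc[of k v] by (auto simp: cum_Suc max_def)
qed

lemma cum_le_one: "k \<le> H \<Longrightarrow> v \<in> V \<Longrightarrow> v \<noteq> r \<Longrightarrow> cum k v \<le> 1"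
proof (induction k arbitrary: v)
  case 0
  then show ?case by (simp add: cum_0)
next
  case (Suc k)
  have "(\<Sum>i<Suc k. assign i u) \<le> 1" if "u \<in> V" for u
    using Suc.IH[of u] Suc.prems that sum_assign_root[of k] sum_assign_eq_cum[of u k]
    by (cases "u = r") auto
  then have "(\<Sum>i<Suc k. demand (assign i) v) \<le> 1"
    using Suc.prems by (intro sum_demand_le_one) auto
  then show ?case
    using cum_le_demand_or_cum_lower[of "Suc k" v] cum_lower_le_one[of v "Suc k"] Suc.prems
    by auto
qed

lemma cum_H: "v \<in> V \<Longrightarrow> v \<noteq> r \<Longrightarrow> cum H v = 1"
  using cum_lower_le_cum[of v H] cum_le_one[of H v] by (simp add: cum_lower_H)

lemma assign_le_one:
  assumes "v \<in> V" "i \<le> H"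
  shows "assign i v \<le> 1"
proof (cases "i = 0 \<or> v = r")
  case True
  then show ?thesis
    by (cases i) (auto simp: assign_0 assign_root)
next
  case False
  then show ?thesis
    using assign_le_depth_ge[of i v] depth_ge_le_one[of v i] assms by simp
qed

lemma assign_in_A_poly: "(x, \<lambda>v i. assign i v) \<in> A_poly V c r H B"
proof -
  have level_step: "assign i u - assign (Suc i) v + x u v \<le> 1"
    if "u \<in> V" "v \<in> V" "u \<noteq> v" "i < H" for u v i
  proof (cases "v = r")
    case True
    then show ?thesis
      using no_arc_into_root assign_le_one assign_root that by simp
  next
    case False
    then have "demand (assign i) v \<le> assign (Suc i) v"
      by (simp add: assign_Suc cum_Suc)
    then show ?thesis
      using demand_ge[of u v "assign i"] that by simp
  qed
  have level_last: "assign H u + x u v \<le> 1" if "u \<in> V" "v \<in> V" "u \<noteq> v" for u v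
  proof (cases "u = r")
    case True
    then show ?thesis
      using x_le_one that assign_root hop_limit_pos by simp
  next
    case False
    have "x u v \<le> l u H"
      using x_le_order_last no_arc_into_root l_nonneg that False hop_limit_pos
      by (cases "v = r") auto
    then show ?thesis
      using assign_le_depth_ge[of H u] that False hop_limit_pos by (simp add: depth_ge_def)
  qed
  show ?thesis
    unfolding A_poly_def arcs_def
    using x_constraints level_step level_last cum_H cum_eq_sum_assign
      assign_nonneg assign_le_one assign_root
    by (auto simp: assign_0)
qed

end

lemma P_point_if_P_poly:
  "stprbh_instance V c \<rho> r H B \<Longrightarrow> (x, l, g) \<in> P_poly V c r H B \<Longrightarrow> P_point V c r H B x l g"
  by (simp add: P_point_def stprbh_instance_def)

lemma P_poly_x_in_A_poly:
  assumes "stprbh_instance V c \<rho> r H B" and "(x, l, g) \<in> P_poly V c r H B"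
  shows "\<exists>y. (x, y) \<in> A_poly V c r H B"
proof -
  interpret P_point V c r H B x l g
    using P_point_if_P_poly[OF assms] .
  show ?thesis
    using assign_in_A_poly by blast
qed

lemma P_poly_nonempty:
  assumes "stprbh_instance V c \<rho> r H B"
  shows "P_poly V c r H B \<noteq> {}"
proof -
  define l :: "'a \<Rightarrow> nat \<Rightarrow> real" where
    "l v i = (if (v = r \<and> 0 < i) \<or> 1 < i then 1 else 0)" for v i
  have "((\<lambda>u v. 0), l, \<lambda>i v. 1 - l v (Suc i)) \<in> P_poly V c r H B"
    using assms by (auto simp: P_poly_def x_constraints_def stprbh_instance_def l_def)
  then show ?thesis by blast
qed

lemma A_objective_bdd_above:
  assumes inst: "stprbh_instance V c \<rho> r H B"
  shows "bdd_above ((\<lambda>(x, y). stprbh_obj V \<rho> r x) ` A_poly V c r H B)"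
proof (rule bdd_aboveI)
  fix t assume "t \<in> (\<lambda>(x, y). stprbh_obj V \<rho> r x) ` A_poly V c r H B"
  then obtain x y where A: "(x, y) \<in> A_poly V c r H B" and t: "t = stprbh_obj V \<rho> r x"
    by auto
  have "x u v * \<rho> v \<le> \<rho> v" if "(u, v) \<in> arcs V" for u v
    using A inst that by (intro mult_left_le_one_le)
      (auto simp: A_poly_def x_constraints_def stprbh_instance_def arcs_def)
  then have "(\<Sum>(u, v)\<in>arcs V. x u v * \<rho> v) \<le> (\<Sum>(u, v)\<in>arcs V. \<rho> v)"
    by (intro sum_mono) auto
  then show "t \<le> \<rho> r + (\<Sum>(u, v)\<in>arcs V. \<rho> v)"
    using t by (simp add: stprbh_obj_def)
qed

theorem nu_P_le_nu_A:
  assumes inst: "stprbh_instance V c \<rho> r H B"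
  shows "nu_P V c \<rho> r H B \<le> nu_A V c \<rho> r H B"
  unfolding nu_P_def nu_A_def
proof (rule cSup_subset_mono)
  show "(\<lambda>(x, l, g). stprbh_obj V \<rho> r x) ` P_poly V c r H B \<noteq> {}"
    using P_poly_nonempty[OF inst] by blast
  show "bdd_above ((\<lambda>(x, y). stprbh_obj V \<rho> r x) ` A_poly V c r H B)"
    using A_objective_bdd_above[OF inst] .
  show "(\<lambda>(x, l, g). stprbh_obj V \<rho> r x) ` P_poly V c r H B
        \<subseteq> (\<lambda>(x, y). stprbh_obj V \<rho> r x) ` A_poly V c r H B"
  proof clarify
    fix x l g assume "(x, l, g) \<in> P_poly V c r H B"
    then obtain y where "(x, y) \<in> A_poly V c r H B"
      using P_poly_x_in_A_poly[OF inst] by blast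
    then show "stprbh_obj V \<rho> r x \<in> (\<lambda>(x, y). stprbh_obj V \<rho> r x) ` A_poly V c r H B"
      by force
  qed
qed

lemma P_objective_eq_root_revenue:
  assumes inst: "stprbh_instance V c \<rho> r H B" and P: "(x, l, g) \<in> P_poly V c r H B"
    and revenue_at_root: "\<And>v. v \<in> V \<Longrightarrow> v \<noteq> r \<Longrightarrow> \<rho> v = 0"
  shows "stprbh_obj V \<rho> r x = \<rho> r"
proof -
  interpret P_point V c r H B x l g
    using P_point_if_P_poly[OF inst P] .
  have "(\<Sum>(u, v)\<in>arcs V. x u v * \<rho> v) = 0"
    by (rule sum.neutral)
      (use no_arc_into_root revenue_at_root root_in_V in \<open>auto simp: arcs_def\<close>)
  then show ?thesis
    by (simp add: stprbh_obj_def)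
qed

lemma nu_P_eq_root_revenue:
  assumes inst: "stprbh_instance V c \<rho> r H B"
    and "\<And>v. v \<in> V \<Longrightarrow> v \<noteq> r \<Longrightarrow> \<rho> v = 0"
  shows "nu_P V c \<rho> r H B = \<rho> r"
proof -
  have "\<forall>(x, l, g)\<in>P_poly V c r H B. stprbh_obj V \<rho> r x = \<rho> r"
    using P_objective_eq_root_revenue[OF inst _ assms(2)] by blast
  then have "(\<lambda>(x, l, g). stprbh_obj V \<rho> r x) ` P_poly V c r H B = {\<rho> r}"
    using P_poly_nonempty[OF inst] by (auto intro!: rev_image_eqI)
  then show ?thesis
    by (simp add: nu_P_def)
qed

definition cycle_x :: "nat \<Rightarrow> nat \<Rightarrow> real" where
  "cycle_x u v = (if (u, v) = (0, 2) then 1 else if (u, v) \<in> {(2, 1), (1, 0)} then 1/2 else 0)"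

definition cycle_y :: "nat \<Rightarrow> nat \<Rightarrow> real" where
  "cycle_y v i = (if v = 0 then (if i = 0 then 1 else 0)
                  else if v = 1 then (if i = 0 then 0 else 1/2)
                  else (if i = 1 then 1 else 0))"

lemma arcs_three_nodes: "arcs {0, 1, 2::nat} = {(0, 1), (0, 2), (1, 0), (1, 2), (2, 0), (2, 1)}"
  by (auto simp: arcs_def)

lemma cycle_in_A_poly: "(cycle_x, cycle_y) \<in> A_poly {0, 1, 2} (\<lambda>u v. 1) 0 2 2"
proof -
  have "{1..2::nat} = {1, 2}"
    by auto
  moreover have "(\<forall>i<2. P i) \<longleftrightarrow> P 0 \<and> P 1" for P :: "nat \<Rightarrow> bool"
    by (auto simp: numeral_2_eq_2 less_Suc_eq)
  moreover have "(\<forall>i\<le>2. P i) \<longleftrightarrow> P 0 \<and> P 1 \<and> P 2" for P :: "nat \<Rightarrow> bool"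
    by (auto simp: numeral_2_eq_2 le_Suc_eq)
  ultimately show ?thesis
    unfolding A_poly_def x_constraints_def arcs_three_nodes
    by (simp add: cycle_x_def cycle_y_def insert_Diff_if)
qed

theorem theorem5:
  shows "(\<forall>(V :: 'a set) c \<rho> r H B. stprbh_instance V c \<rho> r H B \<longrightarrow>
            nu_P V c \<rho> r H B \<le> nu_A V c \<rho> r H B) \<and>
         (\<exists>(V :: nat set) c \<rho> r H B. stprbh_instance V c \<rho> r H B \<and>
            nu_P V c \<rho> r H B < nu_A V c \<rho> r H B)"
proof (intro conjI allI impI exI)
  let ?V = "{0, 1, 2::nat}" and ?c = "\<lambda>u v. 1 :: real"
    and ?\<rho> = "\<lambda>v::nat. if v = 0 then 1 else 0 :: real"
  show inst: "stprbh_instance ?V ?c ?\<rho> 0 2 2"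
    by (simp add: stprbh_instance_def)
  have "stprbh_obj ?V ?\<rho> 0 cycle_x \<le> nu_A ?V ?c ?\<rho> 0 2 2"
    unfolding nu_A_def using cycle_in_A_poly A_objective_bdd_above[OF inst]
    by (force intro: cSup_upper)
  moreover have "stprbh_obj ?V ?\<rho> 0 cycle_x = 3/2"
    unfolding stprbh_obj_def arcs_three_nodes by (simp add: cycle_x_def)
  moreover have "nu_P ?V ?c ?\<rho> 0 2 2 = 1"
    using nu_P_eq_root_revenue[OF inst] by simp
  ultimately show "nu_P ?V ?c ?\<rho> 0 2 2 < nu_A ?V ?c ?\<rho> 0 2 2"
    by simp
qed (rule nu_P_le_nu_A)

end
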